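(* Let $\alpha>0$ be such that $d_{g,\alpha}(p,q)=\|p^{-1}\cdot q\|_{g,\alpha}$ is a distance on $\mathbb H$ (in particular for any $0<\alpha\le 2$), where $\|(x,y,z)\|_{g,\alpha}=\big((x^2+y^2)^2+4\alpha^2z^2\big)^{1/4}$. Then BCP does not hold for $d_{g,\alpha}$ on $\mathbb H$. In particular BCP fails for the Cygan–Korányi distance $d_{g,2}$.
   Context: $\mathbb H=\mathbb R^3$ with group law $(x,y,z)\cdot(x',y',z')=(x+x',y+y',z+z'+\tfrac12(xy'-yx'))$. BCP holds for $d$ if there is $N\geq1$ such that for every bounded $A$ and every family $\mathcal B$ of closed balls with each point of $A$ the center of some ball of $\mathcal B$, some subfamily $\mathcal F\subset\mathcal B$ satisfies $\chi_A\le\sum_{B\in\mathcal F}\chi_B\le N$. *)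

theory Defs
  imports "HOL-Analysis.Analysis"
begin

type_synonym heis = "real \<times> real \<times> real"

definition hmult :: "heis \<Rightarrow> heis \<Rightarrow> heis" where
  "hmult p q = (case p of (x, y, z) \<Rightarrow> case q of (x', y', z') \<Rightarrow>
      (x + x', y + y', z + z' + (x * y' - y * x') / 2))"

definition hinv :: "heis \<Rightarrow> heis" where
  "hinv p = (case p of (x, y, z) \<Rightarrow> (-x, -y, -z))"

definition gnorm :: "real \<Rightarrow> heis \<Rightarrow> real" where
  "gnorm \<alpha> p = (case p of (x, y, z) \<Rightarrow> ((x^2 + y^2)^2 + 4 * \<alpha>^2 * z^2) powr (1/4))"

definition dg :: "real \<Rightarrow> heis \<Rightarrow> heis \<Rightarrow> real" where
  "dg \<alpha> p q = gnorm \<alpha> (hmult (hinv p) q)"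

definition is_distance :: "('a \<Rightarrow> 'a \<Rightarrow> real) \<Rightarrow> bool" where
  "is_distance d \<longleftrightarrow> (\<forall>p q. d p q = 0 \<longleftrightarrow> p = q) \<and> (\<forall>p q. d p q = d q p)
     \<and> (\<forall>p q r. d p r \<le> d p q + d q r)"

definition closed_ball_d :: "('a \<Rightarrow> 'a \<Rightarrow> real) \<Rightarrow> 'a \<Rightarrow> real \<Rightarrow> 'a set" where
  "closed_ball_d d c r = {q. d c q \<le> r}"

definition bounded_d :: "('a \<Rightarrow> 'a \<Rightarrow> real) \<Rightarrow> 'a set \<Rightarrow> bool" where
  "bounded_d d A \<longleftrightarrow> (\<exists>c R. \<forall>a\<in>A. d c a \<le> R)"

definition BCP :: "('a \<Rightarrow> 'a \<Rightarrow> real) \<Rightarrow> bool" where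
  "BCP d \<longleftrightarrow> (\<exists>N::nat. N \<ge> 1 \<and>
     (\<forall>A \<B>. bounded_d d A
        \<and> (\<forall>B\<in>\<B>. \<exists>c r. r > 0 \<and> B = closed_ball_d d c r)
        \<and> (\<forall>a\<in>A. \<exists>r>0. closed_ball_d d a r \<in> \<B>)
      \<longrightarrow> (\<exists>\<F>\<subseteq>\<B>. (\<forall>x\<in>A. \<exists>B\<in>\<F>. x \<in> B)
             \<and> (\<forall>x. finite {B\<in>\<F>. x \<in> B} \<and> card {B\<in>\<F>. x \<in> B} \<le> N))))"

end

theory Submission
  imports Defs
begin

text \<open>
  BCP fails as soon as, for every N, there are N + 1 balls sharing a point such
  that each ball contains its own centre and no other centre (first section; this part is
  valid for any function d).  For the gauge distances such families are built from the dilates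
  x k = delta(eps^k) (1, k, T) of the points (1, k, T), k = 0..N, each ball being centred at x k
  and passing through the origin.  Dilations are automorphisms scaling the gauge, so, after left
  translation by x k and dilation by eps^-k, everything reduces to two estimates at unit scale:
  a small dilate of (1, j, T) has smaller gauge than (1, i, T), and, for i < j, it lies outside
  the ball through the origin centred at (1, i, T).  The latter is a first-order expansion in
  the dilation factor: for T large the vertical coordinate of (1, i, T)^-1 delta(t) (1, j, T)
  grows faster than the horizontal one shrinks.
\<close>

section \<open>An abstract obstruction to the Besicovitch covering property\<close>

lemma finite_imp_bounded_d:
  fixes d :: "'a \<Rightarrow> 'a \<Rightarrow> real"
  assumes "finite A"
  shows "bounded_d d A"
proof -
  have "\<forall>a\<in>A. d c a \<le> Max (d c ` A)" for c
    using assms by (auto intro: Max_ge)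
  then show ?thesis
    unfolding bounded_d_def by blast
qed

text \<open>If for every N one finds N+1 closed balls, each containing its own centre but none of
  the other centres, and all sharing a common point, then BCP fails: a covering subfamily of
  the centres must keep all N+1 balls, and they overlap N+1 times at the common point.\<close>

lemma not_BCP_if_large_separated_families:
  fixes d :: "'a \<Rightarrow> 'a \<Rightarrow> real"
  assumes families: "\<And>N::nat. \<exists>x r p.
      (\<forall>k\<le>N. r k > 0 \<and> d (x k) (x k) \<le> r k \<and> d (x k) p \<le> r k)
    \<and> (\<forall>k\<le>N. \<forall>l\<le>N. k \<noteq> l \<longrightarrow> d (x k) (x l) > r k)"
  shows "\<not> BCP d"
proof
  assume "BCP d"
  then obtain N :: nat where BCP_N: "\<forall>A \<B>. bounded_d d A
        \<and> (\<forall>B\<in>\<B>. \<exists>c r. r > 0 \<and> B = closed_ball_d d c r)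
        \<and> (\<forall>a\<in>A. \<exists>r>0. closed_ball_d d a r \<in> \<B>)
      \<longrightarrow> (\<exists>\<F>\<subseteq>\<B>. (\<forall>x\<in>A. \<exists>B\<in>\<F>. x \<in> B)
             \<and> (\<forall>x. finite {B\<in>\<F>. x \<in> B} \<and> card {B\<in>\<F>. x \<in> B} \<le> N))"
    unfolding BCP_def by (elim exE conjE) (rule that)
  obtain x r p where
    balls: "\<forall>k\<le>N. r k > 0 \<and> d (x k) (x k) \<le> r k \<and> d (x k) p \<le> r k"
    and separated: "\<forall>k\<le>N. \<forall>l\<le>N. k \<noteq> l \<longrightarrow> d (x k) (x l) > r k"
    using families[of N] by (elim exE conjE) (rule that)
  define ball where "ball k = closed_ball_d d (x k) (r k)" for k
  have own_centre: "x l \<in> ball k \<longleftrightarrow> l = k" if "k \<le> N" "l \<le> N" for k l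
  proof
    assume "x l \<in> ball k"
    then have "\<not> d (x k) (x l) > r k" unfolding ball_def closed_ball_d_def by simp
    then show "l = k" using separated that by blast
  next
    assume "l = k"
    then show "x l \<in> ball k" using balls that(1) unfolding ball_def closed_ball_d_def by simp
  qed
  have bounded: "bounded_d d (x ` {..N})"
    by (rule finite_imp_bounded_d) simp
  have radii: "\<forall>B\<in>ball ` {..N}. \<exists>c r. r > 0 \<and> B = closed_ball_d d c r"
    using balls unfolding ball_def by auto
  have centred: "\<forall>a\<in>x ` {..N}. \<exists>r>0. closed_ball_d d a r \<in> ball ` {..N}"
    using balls unfolding ball_def by auto
  obtain \<F> where \<F>: "\<F> \<subseteq> ball ` {..N}" and covers: "\<forall>y\<in>x ` {..N}. \<exists>B\<in>\<F>. y \<in> B"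
    and overlap: "\<forall>y. finite {B\<in>\<F>. y \<in> B} \<and> card {B\<in>\<F>. y \<in> B} \<le> N"
    using BCP_N[rule_format, OF conjI[OF bounded conjI[OF radii centred]]] by blast
  have p_overlap: "finite {B\<in>\<F>. p \<in> B}" "card {B\<in>\<F>. p \<in> B} \<le> N"
    using overlap[rule_format, of p] by simp_all
  have kept: "ball k \<in> \<F>" if "k \<le> N" for k
  proof -
    have "x k \<in> x ` {..N}" using that by simp
    then obtain B where "B \<in> \<F>" and "x k \<in> B" using covers by blast
    moreover from \<open>B \<in> \<F>\<close> obtain l where "l \<le> N" and "B = ball l" using \<F> by auto
    ultimately show ?thesis using own_centre[OF \<open>l \<le> N\<close> that] by simp
  qed
  have "ball ` {..N} \<subseteq> {B\<in>\<F>. p \<in> B}"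
    using kept balls unfolding ball_def closed_ball_d_def by auto
  then have "card (ball ` {..N}) \<le> card {B\<in>\<F>. p \<in> B}"
    using p_overlap(1) by (rule card_mono[rotated])
  moreover have "inj_on ball {..N}"
  proof (rule inj_onI)
    fix k l assume "k \<in> {..N}" "l \<in> {..N}" "ball k = ball l"
    then show "k = l" using own_centre[of l k] own_centre[of k k] by simp
  qed
  then have "card (ball ` {..N}) = Suc N"
    by (simp add: card_image)
  ultimately show False using p_overlap(2) by simp
qed

section \<open>Dilations and the fourth power of the gauge\<close>

text \<open>The fourth power of the gauge is a polynomial, which makes it the convenient quantity
  to compare: since powr (1/4) is strictly monotone, comparing distances amounts to comparing
  these polynomials.\<close>

definition gnorm4 :: "real \<Rightarrow> heis \<Rightarrow> real" where
  "gnorm4 \<alpha> p = (case p of (x, y, z) \<Rightarrow> (x^2 + y^2)^2 + 4 * \<alpha>^2 * z^2)"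

definition hdil :: "real \<Rightarrow> heis \<Rightarrow> heis" where
  "hdil s p = (case p of (x, y, z) \<Rightarrow> (s * x, s * y, s^2 * z))"

lemma gnorm_eq_gnorm4: "gnorm \<alpha> p = gnorm4 \<alpha> p powr (1/4)"
  by (cases p) (simp add: gnorm_def gnorm4_def)

lemma gnorm4_nonneg: "gnorm4 \<alpha> p \<ge> 0"
  by (cases p) (simp add: gnorm4_def)

lemma gnorm4_hinv: "gnorm4 \<alpha> (hinv p) = gnorm4 \<alpha> p"
  by (cases p) (simp add: gnorm4_def hinv_def)

lemma gnorm4_hdil: "gnorm4 \<alpha> (hdil s p) = s^4 * gnorm4 \<alpha> p"
  by (cases p) (simp add: gnorm4_def hdil_def algebra_simps power2_eq_square power4_eq_xxxx)

lemma hdil_hmult: "hdil s (hmult p q) = hmult (hdil s p) (hdil s q)"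
  by (cases p; cases q) (simp add: hdil_def hmult_def algebra_simps power2_eq_square)

lemma hdil_hinv: "hdil s (hinv p) = hinv (hdil s p)"
  by (cases p) (simp add: hdil_def hinv_def)

lemma hdil_hdil: "hdil s (hdil t p) = hdil (s * t) p"
  by (cases p) (simp add: hdil_def power_mult_distrib)

lemma hmult_origin: "hmult p (0, 0, 0) = p"
  by (cases p) (simp add: hmult_def)

lemma hmult_hinv_self: "hmult (hinv p) p = (0, 0, 0)"
  by (cases p) (simp add: hmult_def hinv_def)

lemma gnorm4_origin: "gnorm4 \<alpha> (0, 0, 0) = 0"
  by (simp add: gnorm4_def)

lemma dg_self: "dg \<alpha> p p = 0"
  by (simp add: dg_def gnorm_eq_gnorm4 hmult_hinv_self gnorm4_origin)

lemma dg_sym: "dg \<alpha> p q = dg \<alpha> q p"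
proof -
  have "hmult (hinv q) p = hinv (hmult (hinv p) q)"
    by (cases p; cases q) (simp add: hmult_def hinv_def field_simps)
  then show ?thesis
    by (simp add: dg_def gnorm_eq_gnorm4 gnorm4_hinv)
qed

lemma dg_less_if_gnorm4_less:
  assumes "gnorm4 \<alpha> (hmult (hinv p) q) < gnorm4 \<alpha> (hmult (hinv p') q')"
  shows "dg \<alpha> p q < dg \<alpha> p' q'"
  unfolding dg_def gnorm_eq_gnorm4 by (rule powr_less_mono2) (simp_all add: gnorm4_nonneg assms)

section \<open>The key estimate at unit scale\<close>

text \<open>The constant below bounds
  the second-order terms in the expansion of the gauge; it depends only on the parameter
  \<alpha>, the range n of the middle coordinates and the height T.\<close>

definition separation_constant :: "real \<Rightarrow> real \<Rightarrow> real \<Rightarrow> real" where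
  "separation_constant \<alpha> n T = 4 * (1 + n^2)^2 + 4 * (((1 + n^2)^2 + 1) * n) + 8 * (\<alpha>^2 * T^2)"

lemma bounded_product:
  fixes a b c e n :: real
  assumes "0 \<le> a" "a \<le> n" "0 \<le> b" "b \<le> n" "0 \<le> c" "c \<le> n" "0 \<le> e" "e \<le> n"
  shows "(1 + a * b) * (1 + c * e) \<le> (1 + n^2)^2"
proof -
  have "1 + a * b \<le> 1 + n^2" "1 + c * e \<le> 1 + n^2"
    using assms by (simp_all add: power2_eq_square mult_mono)
  then show ?thesis
    using assms by (simp add: power2_eq_square mult_mono)
qed

lemma separation_constant_ge_one:
  assumes "0 \<le> n"
  shows "1 \<le> separation_constant \<alpha> n T"
proof -
  have "1 \<le> (1 + n^2)^2" "0 \<le> ((1 + n^2)^2 + 1) * n" "0 \<le> \<alpha>^2 * T^2"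
    using assms by simp_all
  then show ?thesis
    unfolding separation_constant_def by linarith
qed

lemma admissible_scale_le_one:
  assumes "0 \<le> n" "0 < t" "t * separation_constant \<alpha> n T < 1"
  shows "t \<le> 1"
proof -
  have "t * 1 \<le> t * separation_constant \<alpha> n T"
    using separation_constant_ge_one[OF assms(1)] assms(2) by (intro mult_left_mono) simp_all
  then show ?thesis
    using assms(3) by simp
qed

text \<open>Bounds on the first-order coefficient (the gain, at least 4) and on the second-order
  coefficient (the loss, at most the separation constant) in the expansion of the gauge along
  the segment from (1, i, T) towards small dilates of (1, j, T).  The choice of T, with
  alpha^2 T exceeding (1 + n^2)^2, makes the vertical gain beat the horizontal loss.\<close>

lemma expansion_coefficient_bounds:
  fixes \<alpha> T i j n :: real
  assumes ij: "0 \<le> i" "i + 1 \<le> j" "j \<le> n"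
    and T: "\<alpha>^2 * T = (1 + n^2)^2 + 1"
  shows "4 \<le> 4 * (\<alpha>^2 * (j - i) * T) - 4 * ((1 + i * i) * (1 + i * j))"
    and "4 * ((1 + i * j) * (1 + j * j)) + 4 * (\<alpha>^2 * (j - i) * T) + 8 * (\<alpha>^2 * T^2)
      \<le> separation_constant \<alpha> n T"
proof -
  define K where "K = (1 + n^2)^2"
  have K0: "0 \<le> K + 1"
    unfolding K_def by simp
  have "(1 + i * i) * (1 + i * j) \<le> K" "(1 + i * j) * (1 + j * j) \<le> K"
    unfolding K_def by (rule bounded_product; use ij in linarith)+
  have "\<alpha>^2 * (j - i) * T = (\<alpha>^2 * T) * (j - i)"
    by (simp add: algebra_simps)
  then have height: "\<alpha>^2 * (j - i) * T = (K + 1) * (j - i)"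
    using T unfolding K_def by simp
  have "K + 1 \<le> \<alpha>^2 * (j - i) * T"
    unfolding height using mult_left_mono[of 1 "j - i" "K + 1"] ij K0 by simp
  then show "4 \<le> 4 * (\<alpha>^2 * (j - i) * T) - 4 * ((1 + i * i) * (1 + i * j))"
    using \<open>(1 + i * i) * (1 + i * j) \<le> K\<close> by linarith
  have "\<alpha>^2 * (j - i) * T \<le> (K + 1) * n"
    unfolding height using mult_left_mono[of "j - i" n "K + 1"] ij K0 by simp
  then show "4 * ((1 + i * j) * (1 + j * j)) + 4 * (\<alpha>^2 * (j - i) * T) + 8 * (\<alpha>^2 * T^2)
      \<le> separation_constant \<alpha> n T"
    unfolding separation_constant_def K_def[symmetric]
    using \<open>(1 + i * j) * (1 + j * j) \<le> K\<close> by linarith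
qed

text \<open>The increment of its fourth power is t (L - t Q + t R), with R \<ge> 0,
  first-order coefficient L \<ge> 4 and Q at most the separation constant.\<close>

lemma unit_scale_separation:
  fixes \<alpha> T t i j n :: real
  assumes ij: "0 \<le> i" "i + 1 \<le> j" "j \<le> n"
    and T: "\<alpha>^2 * T = (1 + n^2)^2 + 1"
    and t: "0 < t" "t * separation_constant \<alpha> n T < 1"
  shows "gnorm4 \<alpha> (1, i, T) < gnorm4 \<alpha> (hmult (hinv (1, i, T)) (hdil t (1, j, T)))"
proof -
  define A B C s where "A = 1 + i^2" and "B = 2 * (1 + i * j)" and "C = 1 + j^2" and "s = j - i"
  define L where "L = 4 * (\<alpha>^2 * s * T) - 2 * (A * B)"
  define Q where "Q = 2 * (B * C) + 4 * (\<alpha>^2 * s * T) + 8 * (\<alpha>^2 * T^2)"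
  define R where "R = (B^2 + 2 * A * C) + 2 * B * C * (1 - t) + C^2 * t^2
    + \<alpha>^2 * s^2 + 4 * \<alpha>^2 * (s * T * (1 - t) + T^2 * t^2)"
  have expansion: "gnorm4 \<alpha> (hmult (hinv (1, i, T)) (hdil t (1, j, T)))
      = gnorm4 \<alpha> (1, i, T) + t * (L - t * Q + t * R)"
    unfolding gnorm4_def hmult_def hinv_def hdil_def A_def B_def C_def s_def L_def Q_def R_def
    by (simp add: field_simps power2_eq_square)
  have "A * B = 2 * ((1 + i * i) * (1 + i * j))" "B * C = 2 * ((1 + i * j) * (1 + j * j))"
    unfolding A_def B_def C_def by (simp_all add: power2_eq_square algebra_simps)
  then have "4 \<le> L" and "Q \<le> separation_constant \<alpha> n T"
    using expansion_coefficient_bounds[OF ij T] unfolding L_def Q_def s_def by linarith+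
  have "0 < \<alpha>^2 * T"
    using T zero_le_power2[of "1 + n^2"] by linarith
  then have "0 < T"
    by (simp add: zero_less_mult_iff)
  moreover have "t \<le> 1"
    by (rule admissible_scale_le_one[OF _ t]) (use ij in linarith)
  moreover have "0 \<le> A" "0 \<le> B" "0 \<le> C" "0 \<le> s"
    using ij unfolding A_def B_def C_def s_def by simp_all
  ultimately have "0 \<le> R"
    unfolding R_def by (intro add_nonneg_nonneg mult_nonneg_nonneg) simp_all
  have "t * Q \<le> t * separation_constant \<alpha> n T"
    using \<open>Q \<le> separation_constant \<alpha> n T\<close> t(1) by (intro mult_left_mono) simp_all
  moreover have "0 \<le> t * R"
    using \<open>0 \<le> R\<close> t(1) by simp
  ultimately have "0 < L - t * Q + t * R"
    using \<open>4 \<le> L\<close> t(2) by linarith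
  then show ?thesis
    using expansion t(1) by simp
qed

lemma one_le_gnorm4_unit: "1 \<le> gnorm4 \<alpha> (1, i, T)"
  unfolding gnorm4_def by (simp add: add_increasing2)

lemma unit_scale_shrinking:
  fixes \<alpha> T t i j n :: real
  assumes j: "0 \<le> j" "j \<le> n"
    and t: "0 < t" "t * separation_constant \<alpha> n T < 1"
  shows "gnorm4 \<alpha> (hdil t (1, j, T)) < gnorm4 \<alpha> (1, i, T)"
proof -
  have "t \<le> 1"
    by (rule admissible_scale_le_one[OF _ t]) (use j in linarith)
  then have "t^4 \<le> t^1"
    using t(1) by (intro power_decreasing) simp_all
  have "(1 + j^2)^2 \<le> (1 + n^2)^2"
    using j by (intro power_mono) (simp_all add: power_mono)
  moreover have "0 \<le> ((1 + n^2)^2 + 1) * n" "0 \<le> (1 + n^2)^2" "0 \<le> \<alpha>^2 * T^2"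
    using j by simp_all
  moreover have "gnorm4 \<alpha> (1, j, T) = (1 + j^2)^2 + 4 * (\<alpha>^2 * T^2)"
    unfolding gnorm4_def by simp
  ultimately have bound: "gnorm4 \<alpha> (1, j, T) \<le> separation_constant \<alpha> n T"
    unfolding separation_constant_def by linarith
  have "gnorm4 \<alpha> (hdil t (1, j, T)) = t^4 * gnorm4 \<alpha> (1, j, T)"
    by (rule gnorm4_hdil)
  also have "\<dots> \<le> t * separation_constant \<alpha> n T"
    using \<open>t^4 \<le> t^1\<close> bound gnorm4_nonneg t(1) by (simp add: mult_mono)
  also have "\<dots> < 1"
    by (rule t(2))
  also have "1 \<le> gnorm4 \<alpha> (1, i, T)"
    by (rule one_le_gnorm4_unit)
  finally show ?thesis .
qed

section \<open>Failure of BCP for the gauge distances\<close>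

text \<open>By symmetry of dg, a later centre
  x k then keeps every earlier x l outside its own, smaller, ball too.\<close>

lemma separated_balls_through_origin:
  fixes \<alpha> :: real and x :: "nat \<Rightarrow> heis"
  assumes positive: "\<And>k. k \<le> N \<Longrightarrow> 0 < gnorm4 \<alpha> (x k)"
    and far: "\<And>k l. k < l \<Longrightarrow> l \<le> N \<Longrightarrow> gnorm4 \<alpha> (x k) < gnorm4 \<alpha> (hmult (hinv (x k)) (x l))"
    and shrinking: "\<And>k l. k < l \<Longrightarrow> l \<le> N \<Longrightarrow> gnorm4 \<alpha> (x l) < gnorm4 \<alpha> (x k)"
  defines "r k \<equiv> dg \<alpha> (x k) (0, 0, 0)"
  shows "(\<forall>k\<le>N. r k > 0 \<and> dg \<alpha> (x k) (x k) \<le> r k \<and> dg \<alpha> (x k) (0, 0, 0) \<le> r k)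
    \<and> (\<forall>k\<le>N. \<forall>l\<le>N. k \<noteq> l \<longrightarrow> dg \<alpha> (x k) (x l) > r k)"
proof (intro conjI allI impI)
  fix k assume "k \<le> N"
  then have "dg \<alpha> (x k) (x k) < r k"
    unfolding r_def using positive
    by (intro dg_less_if_gnorm4_less) (simp add: hmult_hinv_self hmult_origin gnorm4_origin gnorm4_hinv)
  then show "r k > 0" and "dg \<alpha> (x k) (x k) \<le> r k"
    by (simp_all add: dg_self)
  show "dg \<alpha> (x k) (0, 0, 0) \<le> r k"
    by (simp add: r_def)
next
  have radius_below: "r k < dg \<alpha> (x k) (x l)" if "k < l" "l \<le> N" for k l
    unfolding r_def using far[OF that]
    by (intro dg_less_if_gnorm4_less) (simp add: hmult_origin gnorm4_hinv)
  fix k l assume "k \<le> N" "l \<le> N" "k \<noteq> l"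
  then consider "k < l" | "l < k" by linarith
  then show "dg \<alpha> (x k) (x l) > r k"
  proof cases
    case 1
    then show ?thesis using radius_below \<open>l \<le> N\<close> by blast
  next
    case 2
    then have "r k < r l"
      unfolding r_def using shrinking[OF 2 \<open>k \<le> N\<close>]
      by (intro dg_less_if_gnorm4_less) (simp add: hmult_origin gnorm4_hinv)
    also have "r l < dg \<alpha> (x l) (x k)"
      using radius_below[OF 2 \<open>k \<le> N\<close>] .
    finally show ?thesis
      by (simp add: dg_sym)
  qed
qed

text \<open>The dilates delta(eps^k) (1, k, T) satisfy the hypotheses of the previous lemma: left
  translation by the k-th point and dilation by eps^-k turn each comparison between the k-th
  and the l-th point (k < l) into the unit scale estimates with t = eps^(l - k).\<close>

lemma dilated_pair_estimates:
  fixes \<alpha> T \<epsilon> n :: real and k l :: nat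
  assumes T: "\<alpha>^2 * T = (1 + n^2)^2 + 1"
    and \<epsilon>: "0 < \<epsilon>" "\<epsilon> * separation_constant \<alpha> n T < 1"
    and kl: "k < l" "real l \<le> n"
  defines "x i \<equiv> hdil (\<epsilon>^i) (1, real i, T)"
  shows "gnorm4 \<alpha> (x k) < gnorm4 \<alpha> (hmult (hinv (x k)) (x l))"
    and "gnorm4 \<alpha> (x l) < gnorm4 \<alpha> (x k)"
proof -
  define t where "t = \<epsilon>^(l - k)"
  have "0 \<le> n"
    using kl by linarith
  have "\<epsilon> \<le> 1"
    using admissible_scale_le_one[OF \<open>0 \<le> n\<close> \<epsilon>] .
  then have "t \<le> \<epsilon>^1"
    unfolding t_def using kl \<epsilon>(1) by (intro power_decreasing) simp_all
  moreover have "0 \<le> separation_constant \<alpha> n T"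
    using separation_constant_ge_one[OF \<open>0 \<le> n\<close>, of \<alpha> T] by linarith
  ultimately have "t * separation_constant \<alpha> n T \<le> \<epsilon> * separation_constant \<alpha> n T"
    by (simp add: mult_right_mono)
  then have t: "0 < t" "t * separation_constant \<alpha> n T < 1"
    using \<epsilon> unfolding t_def by simp_all
  have x_l: "x l = hdil (\<epsilon>^k) (hdil t (1, real l, T))"
    using kl(1) by (simp add: x_def t_def hdil_hdil power_add[symmetric])
  have "hmult (hinv (x k)) (x l) = hdil (\<epsilon>^k) (hmult (hinv (1, real k, T)) (hdil t (1, real l, T)))"
    unfolding x_l by (simp add: x_def hdil_hmult hdil_hinv)
  then have translated: "gnorm4 \<alpha> (hmult (hinv (x k)) (x l))
      = (\<epsilon>^k)^4 * gnorm4 \<alpha> (hmult (hinv (1, real k, T)) (hdil t (1, real l, T)))"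
    by (simp add: gnorm4_hdil)
  have x_k': "gnorm4 \<alpha> (x k) = (\<epsilon>^k)^4 * gnorm4 \<alpha> (1, real k, T)"
    by (simp add: x_def gnorm4_hdil)
  have x_l': "gnorm4 \<alpha> (x l) = (\<epsilon>^k)^4 * gnorm4 \<alpha> (hdil t (1, real l, T))"
    unfolding x_l by (rule gnorm4_hdil)
  have "0 < (\<epsilon>^k)^4"
    using \<epsilon>(1) by simp
  moreover have "gnorm4 \<alpha> (1, real k, T) < gnorm4 \<alpha> (hmult (hinv (1, real k, T)) (hdil t (1, real l, T)))"
    using kl T t by (intro unit_scale_separation) simp_all
  moreover have "gnorm4 \<alpha> (hdil t (1, real l, T)) < gnorm4 \<alpha> (1, real k, T)"
    using kl t by (intro unit_scale_shrinking) simp_all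
  ultimately show "gnorm4 \<alpha> (x k) < gnorm4 \<alpha> (hmult (hinv (x k)) (x l))"
    and "gnorm4 \<alpha> (x l) < gnorm4 \<alpha> (x k)"
    unfolding translated x_k' x_l' by simp_all
qed

lemma dg_not_BCP:
  fixes \<alpha> :: real
  assumes "\<alpha> > 0"
  shows "\<not> BCP (dg \<alpha>)"
proof (rule not_BCP_if_large_separated_families)
  fix N :: nat
  define n where "n = real N"
  define T where "T = ((1 + n^2)^2 + 1) / \<alpha>^2"
  define \<epsilon> where "\<epsilon> = 1 / (separation_constant \<alpha> n T + 1)"
  define x where "x k = hdil (\<epsilon>^k) (1, real k, T)" for k :: nat
  have T: "\<alpha>^2 * T = (1 + n^2)^2 + 1"
    unfolding T_def using assms by simp
  have "1 \<le> separation_constant \<alpha> n T"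
    unfolding n_def by (rule separation_constant_ge_one) simp
  then have \<epsilon>: "0 < \<epsilon>" "\<epsilon> * separation_constant \<alpha> n T < 1"
    unfolding \<epsilon>_def by (simp_all add: field_simps)
  have "0 < gnorm4 \<alpha> (x k)" if "k \<le> N" for k
    using \<epsilon>(1) one_le_gnorm4_unit[of \<alpha> "real k" T] by (simp add: x_def gnorm4_hdil)
  moreover have "gnorm4 \<alpha> (x k) < gnorm4 \<alpha> (hmult (hinv (x k)) (x l))"
    and "gnorm4 \<alpha> (x l) < gnorm4 \<alpha> (x k)" if "k < l" "l \<le> N" for k l
    using dilated_pair_estimates[OF T \<epsilon> \<open>k < l\<close>] that unfolding x_def n_def by simp_all
  ultimately have "(\<forall>k\<le>N. dg \<alpha> (x k) (0, 0, 0) > 0 \<and> dg \<alpha> (x k) (x k) \<le> dg \<alpha> (x k) (0, 0, 0)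
        \<and> dg \<alpha> (x k) (0, 0, 0) \<le> dg \<alpha> (x k) (0, 0, 0))
    \<and> (\<forall>k\<le>N. \<forall>l\<le>N. k \<noteq> l \<longrightarrow> dg \<alpha> (x k) (x l) > dg \<alpha> (x k) (0, 0, 0))"
    by (rule separated_balls_through_origin)
  then show "\<exists>x r p. (\<forall>k\<le>N. r k > 0 \<and> dg \<alpha> (x k) (x k) \<le> r k \<and> dg \<alpha> (x k) p \<le> r k)
    \<and> (\<forall>k\<le>N. \<forall>l\<le>N. k \<noteq> l \<longrightarrow> dg \<alpha> (x k) (x l) > r k)"
    by (intro exI[of _ x] exI[of _ "\<lambda>k. dg \<alpha> (x k) (0, 0, 0)"] exI[of _ "(0, 0, 0)"])
qed

text \<open>The theorem: BCP fails for every gauge distance, in particular for the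
  Cygan-Koranyi distance (alpha = 2).  The proof does not need that dg alpha is a distance.\<close>

theorem mainTheorem6:
  shows "(\<forall>\<alpha>::real. \<alpha> > 0 \<and> is_distance (dg \<alpha>) \<longrightarrow> \<not> BCP (dg \<alpha>))
         \<and> \<not> BCP (dg 2)"
  using dg_not_BCP by simp

end
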